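(* For every $q>1$, the sketch $q$-$\mathsf{LL}$ is weakly scale-invariant with base $q$, and $\mathcal{H}(q\text{-}\mathsf{LL})=\phi(q)/\ln q$ and $\mathcal{I}(q\text{-}\mathsf{LL})=\rho(q)/\ln q$.
   Context: A sketch is described by its induced distribution family: for each cardinality $\lambda>0$, a distribution $\psi_\lambda$ on a countable state space; $X_\lambda\sim\psi_\lambda$. Entropy $H(X_\lambda)=-\sum_x\psi_\lambda(x)\log_2\psi_\lambda(x)$, Fisher information $I(\lambda)=\sum_x(\frac{\partial}{\partial\lambda}\psi_\lambda(x))^2/\psi_\lambda(x)$. Weakly scale-invariant with base $q>1$ means: for all $\lambda>0$, $H(X_\lambda)=H(X_{q\lambda})$ and $I(\lambda)=q^2I(q\lambda)$. Then $\mathcal{H}=\int_0^1H(X_{q^r})\,dr$ and $\mathcal{I}=\int_0^1 q^{2r}I(q^r)\,dr$. The sketch $q$-$\mathsf{LL}$ has state space $\mathbb Z$ and $\psi_\lambda(k)=e^{-\lambda/q^k}-e^{-\lambda/q^{k-1}}$. $\phi(q)=\int_{-\infty}^\infty -\big(e^{-e^r}-e^{-qe^r}\big)\log_2\big(e^{-e^r}-e^{-qe^r}\big)\,dr$, $\rho(q)=\int_{-\infty}^\infty \frac{\left(-e^re^{-e^r}+qe^re^{-qe^r}\right)^2}{e^{-e^r}-e^{-qe^r}}\,dr$. *)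

theory Defs
  imports "HOL-Analysis.Analysis"
begin

text \<open>A sketch is given by its induced distribution family
  psi :: real => 'a => real  (psi lam x = probability of state x at cardinality lam),
  on a countable state space 'a.\<close>

definition entropy :: "(real \<Rightarrow> 'a \<Rightarrow> real) \<Rightarrow> real \<Rightarrow> real" where
  "entropy psi lam = (\<Sum>\<^sub>\<infinity>x. - psi lam x * log 2 (psi lam x))"

definition fisher :: "(real \<Rightarrow> 'a \<Rightarrow> real) \<Rightarrow> real \<Rightarrow> real" where
  "fisher psi lam = (\<Sum>\<^sub>\<infinity>x. (deriv (\<lambda>l. psi l x) lam)\<^sup>2 / psi lam x)"

definition weakly_scale_invariant :: "(real \<Rightarrow> 'a \<Rightarrow> real) \<Rightarrow> real \<Rightarrow> bool" where
  "weakly_scale_invariant psi q \<longleftrightarrow> q > 1 \<and>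
     (\<forall>lam>0. entropy psi lam = entropy psi (q * lam) \<and>
              fisher psi lam = q\<^sup>2 * fisher psi (q * lam))"

definition scaled_entropy :: "(real \<Rightarrow> 'a \<Rightarrow> real) \<Rightarrow> real \<Rightarrow> real" where
  "scaled_entropy psi q = integral {0..1} (\<lambda>r. entropy psi (q powr r))"

definition scaled_fisher :: "(real \<Rightarrow> 'a \<Rightarrow> real) \<Rightarrow> real \<Rightarrow> real" where
  "scaled_fisher psi q = integral {0..1} (\<lambda>r. q powr (2 * r) * fisher psi (q powr r))"

definition qLL :: "real \<Rightarrow> real \<Rightarrow> int \<Rightarrow> real" where
  "qLL q lam k = exp (- lam / q powr (real_of_int k)) - exp (- lam / q powr (real_of_int k - 1))"

definition phi_integrand :: "real \<Rightarrow> real \<Rightarrow> real" where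
  "phi_integrand q r = - (exp (- exp r) - exp (- q * exp r)) * log 2 (exp (- exp r) - exp (- q * exp r))"

definition rho_integrand :: "real \<Rightarrow> real \<Rightarrow> real" where
  "rho_integrand q r = (- exp r * exp (- exp r) + q * exp r * exp (- q * exp r))\<^sup>2
                        / (exp (- exp r) - exp (- q * exp r))"

definition phi :: "real \<Rightarrow> real" where
  "phi q = integral UNIV (phi_integrand q)"

definition rho :: "real \<Rightarrow> real" where
  "rho q = integral UNIV (rho_integrand q)"

end

theory Submission
  imports Defs
begin

text \<open>
  With \<open>f(x) = e\<^sup>-\<^sup>x - e\<^sup>-\<^sup>q\<^sup>x\<close>, state \<open>k\<close> of \<open>q\<close>-LL has probability \<open>f(\<lambda>/q\<^sup>k)\<close>, so both the
  entropy and \<open>\<lambda>\<^sup>2\<close> times the Fisher information are sums \<open>\<Sum>\<^sub>k G(\<lambda>/q\<^sup>k)\<close> over all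
  integers \<open>k\<close>. Replacing \<open>\<lambda>\<close> by \<open>q\<lambda>\<close> only shifts \<open>k\<close>, which gives scale invariance.
  Averaging over \<open>\<lambda> = q\<^sup>r\<close>, \<open>r \<in> [0,1]\<close>, the translates \<open>[k, k+1]\<close> tile the line, so
  \<open>\<integral>\<^sub>0\<^sup>1 \<Sum>\<^sub>k G(q\<^sup>r\<^sup>-\<^sup>k) dr = \<integral>\<^sub>\<real> G(q\<^sup>s) ds = (\<integral>\<^sub>\<real> G(e\<^sup>t) dt) / ln q\<close>. All interchanges are
  justified by Tonelli, since the two summands \<open>G\<close> are nonnegative and bounded by a
  multiple of \<open>min(\<surd>x, 1/x)\<close>, which makes the sums over \<open>k\<close> geometrically convergent.
\<close>

definition scale_sum :: "real \<Rightarrow> (real \<Rightarrow> real) \<Rightarrow> real \<Rightarrow> real" where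
  "scale_sum q G lam = (\<Sum>\<^sub>\<infinity>k::int. G (lam / q powr real_of_int k))"

definition sqrt_inverse_bounded :: "real \<Rightarrow> (real \<Rightarrow> real) \<Rightarrow> bool" where
  "sqrt_inverse_bounded C G \<longleftrightarrow> (\<forall>x>0. 0 \<le> G x \<and> G x \<le> C * sqrt x \<and> G x \<le> C / x)"

lemma sqrt_inverse_boundedI:
  assumes nonneg: "\<And>x. x > 0 \<Longrightarrow> 0 \<le> G x"
    and inverse: "\<And>x. x > 0 \<Longrightarrow> G x \<le> C / x"
    and sqrt: "\<And>x. x > 0 \<Longrightarrow> x \<le> 1 \<Longrightarrow> G x \<le> C * sqrt x"
  shows "sqrt_inverse_bounded C G"
  unfolding sqrt_inverse_bounded_def
proof (intro allI impI conjI nonneg inverse)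
  fix x :: real assume x: "x > 0"
  have C: "0 \<le> C" using nonneg[of 1] inverse[of 1] by simp
  show "G x \<le> C * sqrt x"
  proof (cases "x \<le> 1")
    case False
    have "C / x \<le> C * 1" using C False by (simp add: divide_le_eq mult_le_cancel_left1)
    also have "\<dots> \<le> C * sqrt x" using C False by (intro mult_left_mono) auto
    finally show ?thesis using inverse[OF x] by linarith
  qed (use sqrt x in auto)
qed

lemma sqrt_inverse_bounded_nonneg: "sqrt_inverse_bounded C G \<Longrightarrow> 0 \<le> C"
  unfolding sqrt_inverse_bounded_def by (metis div_by_1 order_trans zero_less_one)

lemma scale_sum_mult_base:
  assumes q: "q > 0"
  shows "scale_sum q G (q * lam) = scale_sum q G lam"
proof -
  have "lam / q powr real_of_int (k - 1) = q * lam / q powr real_of_int k" for k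
    using q by (simp add: powr_diff)
  hence "scale_sum q G (q * lam) = (\<Sum>\<^sub>\<infinity>k::int. G (lam / q powr real_of_int (k - 1)))"
    by (simp add: scale_sum_def)
  also have "\<dots> = scale_sum q G lam"
    unfolding scale_sum_def
    by (rule infsum_reindex_bij_betw) (rule bij_betwI[of _ _ _ "\<lambda>k. k + 1"], auto)
  finally show ?thesis .
qed

subsection \<open>Convergence of scale sums\<close>

text \<open>Summable majorant of \<open>min(\<surd>x, 1/x)\<close> along \<open>x = \<lambda>/q\<^sup>k\<close>.\<close>

definition scale_envelope :: "real \<Rightarrow> real \<Rightarrow> int \<Rightarrow> real" where
  "scale_envelope q lam k =
     (if 0 \<le> k then sqrt lam * (1 / sqrt q) ^ nat k else (1 / q) ^ nat (- k) / lam)"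

lemma scale_envelope_has_sum:
  assumes q: "q > 1" and lam: "lam > 0"
  shows "(scale_envelope q lam has_sum (sqrt lam / (1 - 1 / sqrt q) + 1 / (lam * (q - 1)))) UNIV"
proof -
  have "(\<lambda>n. sqrt lam * (1 / sqrt q) ^ n) sums (sqrt lam * (1 / (1 - 1 / sqrt q)))"
    using q by (intro sums_mult geometric_sums) (simp add: real_sqrt_gt_1_iff)
  hence "((\<lambda>n. sqrt lam * (1 / sqrt q) ^ n) has_sum (sqrt lam / (1 - 1 / sqrt q))) UNIV"
    using q lam by (intro sums_nonneg_imp_has_sum) auto
  hence nonneg: "(scale_envelope q lam has_sum (sqrt lam / (1 - 1 / sqrt q))) (int ` UNIV)"
    by (subst has_sum_reindex) (auto simp: o_def scale_envelope_def)
  have "(\<lambda>n. (1 / q) * (1 / q) ^ n / lam) sums ((1 / q) * (1 / (1 - 1 / q)) / lam)"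
    using q by (intro sums_divide sums_mult geometric_sums) simp
  moreover have "(1 / q) * (1 / (1 - 1 / q)) / lam = 1 / (lam * (q - 1))"
    using q lam by (simp add: field_simps)
  ultimately have "((\<lambda>n. (1 / q) * (1 / q) ^ n / lam) has_sum (1 / (lam * (q - 1)))) UNIV"
    using q lam by (intro sums_nonneg_imp_has_sum) (auto simp: mult_ac)
  moreover have "nat (1 + int n) = Suc n" for n by simp
  ultimately have neg: "(scale_envelope q lam has_sum (1 / (lam * (q - 1)))) ((\<lambda>n. - int n - 1) ` UNIV)"
    by (subst has_sum_reindex) (auto simp: inj_on_def o_def scale_envelope_def)
  have "int ` UNIV \<union> (\<lambda>n. - int n - 1) ` UNIV = (UNIV :: int set)"
  proof (intro set_eqI iffI)
    fix k :: int
    show "k \<in> int ` UNIV \<union> (\<lambda>n. - int n - 1) ` UNIV"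
    proof (cases "k \<ge> 0")
      case True thus ?thesis by (auto intro!: image_eqI[of _ _ "nat k"])
    next
      case False thus ?thesis by (auto intro!: image_eqI[of _ _ "nat (- k - 1)"])
    qed
  qed simp
  thus ?thesis
    using has_sum_Un_disjoint[OF nonneg neg] by fastforce
qed

lemma le_scale_envelope:
  assumes G: "sqrt_inverse_bounded C G" and q: "q > 1" and lam: "lam > 0"
  shows "G (lam / q powr real_of_int k) \<le> C * scale_envelope q lam k"
proof (cases "0 \<le> k")
  case True
  have "q powr real_of_int k = q ^ nat k"
    using q True by (simp add: powr_realpow[symmetric])
  hence "sqrt (lam / q powr real_of_int k) = sqrt lam * (1 / sqrt q) ^ nat k"
    by (simp add: real_sqrt_divide real_sqrt_power power_divide)
  moreover have "G (lam / q powr real_of_int k) \<le> C * sqrt (lam / q powr real_of_int k)"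
    using G q lam by (simp add: sqrt_inverse_bounded_def)
  ultimately show ?thesis
    using True by (simp add: scale_envelope_def)
next
  case False
  have "q powr real_of_int k = 1 / q ^ nat (- k)"
    using q False by (simp add: powr_realpow[symmetric] powr_minus_divide[symmetric])
  hence "C / (lam / q powr real_of_int k) = C * scale_envelope q lam k"
    using False by (simp add: power_divide scale_envelope_def)
  moreover have "G (lam / q powr real_of_int k) \<le> C / (lam / q powr real_of_int k)"
  proof -
    have "lam / q powr real_of_int k > 0" using q lam by simp
    thus ?thesis using G unfolding sqrt_inverse_bounded_def by blast
  qed
  ultimately show ?thesis by metis
qed

lemma
  assumes G: "sqrt_inverse_bounded C G" and q: "q > 1" and lam: "lam > 0"
  shows summable_on_scale_sum: "(\<lambda>k. G (lam / q powr real_of_int k)) summable_on UNIV"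
    and scale_sum_le: "scale_sum q G lam \<le> C * (sqrt lam / (1 - 1 / sqrt q) + 1 / (lam * (q - 1)))"
    and scale_sum_nonneg: "0 \<le> scale_sum q G lam"
proof -
  have envelope: "((\<lambda>k. C * scale_envelope q lam k)
      has_sum C * (sqrt lam / (1 - 1 / sqrt q) + 1 / (lam * (q - 1)))) UNIV"
    by (intro has_sum_cmult_right scale_envelope_has_sum q lam)
  have nonneg: "0 \<le> G (lam / q powr real_of_int k)" for k
    using G q lam by (simp add: sqrt_inverse_bounded_def)
  show summable: "(\<lambda>k. G (lam / q powr real_of_int k)) summable_on UNIV"
    by (rule summable_on_comparison_test[OF has_sum_imp_summable[OF envelope]])
       (simp_all add: le_scale_envelope[OF G q lam] nonneg)
  show "scale_sum q G lam \<le> C * (sqrt lam / (1 - 1 / sqrt q) + 1 / (lam * (q - 1)))"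
    unfolding scale_sum_def
    by (rule has_sum_mono[OF has_sum_infsum[OF summable] envelope])
       (rule le_scale_envelope[OF G q lam])
  show "0 \<le> scale_sum q G lam"
    unfolding scale_sum_def by (intro infsum_nonneg nonneg)
qed

lemma scale_sum_le_on_period:
  assumes G: "sqrt_inverse_bounded C G" and q: "q > 1" and r: "r \<in> {0..1}"
  shows "scale_sum q G (q powr r) \<le> C * (sqrt q / (1 - 1 / sqrt q) + 1 / (q - 1))"
proof -
  have lower: "1 \<le> q powr r" using q r by (simp add: ge_one_powr_ge_zero)
  have upper: "q powr r \<le> q" using q r powr_mono[of r 1 q] by simp
  have "scale_sum q G (q powr r)
      \<le> C * (sqrt (q powr r) / (1 - 1 / sqrt q) + 1 / (q powr r * (q - 1)))"
    using scale_sum_le[OF G q, of "q powr r"] q by simp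
  also have "\<dots> \<le> C * (sqrt q / (1 - 1 / sqrt q) + 1 / (q - 1))"
  proof (intro mult_left_mono add_mono divide_right_mono sqrt_inverse_bounded_nonneg[OF G])
    show "sqrt (q powr r) \<le> sqrt q" using upper by simp
    show "0 \<le> 1 - 1 / sqrt q" using q by simp
    show "1 / (q powr r * (q - 1)) \<le> 1 / (q - 1)"
      using lower q by (intro divide_left_mono) (auto simp: mult_le_cancel_right1)
  qed
  finally show ?thesis .
qed

subsection \<open>Periodization\<close>

lemma nn_integral_count_space_int_indicator_unit_interval:
  "(\<integral>\<^sup>+k. indicator {0..<1} (s + real_of_int k) * c \<partial>count_space (UNIV :: int set)) = (c :: ennreal)"
proof -
  have "s + real_of_int k \<in> {0..<1} \<longleftrightarrow> k = - \<lfloor>s\<rfloor>" for k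
  proof -
    have "s + real_of_int k \<in> {0..<1} \<longleftrightarrow> \<lfloor>s + real_of_int k\<rfloor> = 0"
      unfolding floor_eq_iff by simp
    thus ?thesis by linarith
  qed
  hence indicator: "indicator {0..<1} (s + real_of_int k) = (if k = - \<lfloor>s\<rfloor> then 1 else (0 :: ennreal))" for k
    unfolding indicator_def by simp
  have "(\<integral>\<^sup>+k. indicator {0..<1} (s + real_of_int k) * c \<partial>count_space UNIV)
      = (\<Sum>k\<in>{- \<lfloor>s\<rfloor>}. indicator {0..<1} (s + real_of_int k) * c)"
    by (rule nn_integral_count_space') (auto simp: indicator)
  also have "\<dots> = c"
    using indicator[of "- \<lfloor>s\<rfloor>"] by simp
  finally show ?thesis .
qed

lemma nn_integral_lborel_periodize:
  fixes F :: "real \<Rightarrow> ennreal"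
  assumes [measurable]: "F \<in> borel_measurable borel"
  shows "(\<integral>\<^sup>+s. F s \<partial>lborel)
    = (\<integral>\<^sup>+r. indicator {0..<1} r * (\<integral>\<^sup>+k. F (r - real_of_int k) \<partial>count_space UNIV) \<partial>lborel)"
proof -
  have "(\<integral>\<^sup>+s. F s \<partial>lborel)
      = (\<integral>\<^sup>+s. (\<integral>\<^sup>+k. indicator {0..<1} (s + real_of_int k) * F s \<partial>count_space UNIV) \<partial>lborel)"
    by (simp add: nn_integral_count_space_int_indicator_unit_interval)
  also have "\<dots> = (\<integral>\<^sup>+k. (\<integral>\<^sup>+s. indicator {0..<1} (s + real_of_int k) * F s \<partial>lborel) \<partial>count_space UNIV)"
    by (rule nn_integral_count_space_nn_integral) auto
  also have "\<dots> = (\<integral>\<^sup>+k. (\<integral>\<^sup>+r. indicator {0..<1} r * F (r - real_of_int k) \<partial>lborel) \<partial>count_space UNIV)"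
  proof (rule nn_integral_cong)
    fix k :: int
    show "(\<integral>\<^sup>+s. indicator {0..<1} (s + real_of_int k) * F s \<partial>lborel)
        = (\<integral>\<^sup>+r. indicator {0..<1} r * F (r - real_of_int k) \<partial>lborel)"
      using nn_integral_real_affine[of "\<lambda>s. indicator {0..<1} (s + real_of_int k) * F s" 1 "- real_of_int k"]
      by simp
  qed
  also have "\<dots> = (\<integral>\<^sup>+r. (\<integral>\<^sup>+k. indicator {0..<1} r * F (r - real_of_int k) \<partial>count_space UNIV) \<partial>lborel)"
    by (rule nn_integral_count_space_nn_integral[symmetric]) auto
  also have "\<dots> = (\<integral>\<^sup>+r. indicator {0..<1} r * (\<integral>\<^sup>+k. F (r - real_of_int k) \<partial>count_space UNIV) \<partial>lborel)"
    by (intro nn_integral_cong nn_integral_cmult) simp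
  finally show ?thesis .
qed

lemma borel_measurable_nn_integral_count_space_int:
  fixes f :: "int \<Rightarrow> 'a \<Rightarrow> ennreal"
  assumes "\<And>k. f k \<in> borel_measurable M"
  shows "(\<lambda>x. \<integral>\<^sup>+k. f k x \<partial>count_space UNIV) \<in> borel_measurable M"
proof -
  have bij: "bij_betw (from_nat_into (UNIV :: int set)) UNIV UNIV"
    using bij_betw_from_nat_into[of "UNIV :: int set"] by simp
  have eq: "(\<integral>\<^sup>+k. f k x \<partial>count_space UNIV) = (\<Sum>n. f (from_nat_into UNIV n) x)" for x
    by (simp add: nn_integral_bij_count_space[symmetric, OF bij] nn_integral_count_space_nat)
  show ?thesis unfolding eq using assms by measurable
qed

lemma nn_integral_count_space_eq_infsum:
  fixes f :: "'a \<Rightarrow> real"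
  assumes "f summable_on A" "\<And>x. x \<in> A \<Longrightarrow> 0 \<le> f x"
  shows "(\<integral>\<^sup>+x. ennreal (f x) \<partial>count_space A) = ennreal (infsum f A)"
proof -
  have "Infinite_Sum.abs_summable_on f A"
    using assms(1) summable_on_iff_abs_summable_on_real by blast
  hence abs: "Infinite_Set_Sum.abs_summable_on f A"
    using abs_summable_equivalent by blast
  show ?thesis
    using nn_integral_conv_infsetsum[OF abs assms(2)] infsetsum_infsum[OF abs] by simp
qed

context
  fixes q C :: real and G :: "real \<Rightarrow> real"
  assumes q: "q > 1"
    and G: "sqrt_inverse_bounded C G"
    and G_cont: "continuous_on {0<..} G"
begin

lemma borel_measurable_comp_positive:
  assumes "continuous_on UNIV h" "\<And>s. h s > 0"
  shows "(\<lambda>s. G (h s)) \<in> borel_measurable borel"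
  using continuous_on_compose2[OF G_cont assms(1)] assms(2)
  by (intro borel_measurable_continuous_onI) auto

lemma nn_integral_count_space_scale_sum:
  assumes "lam > 0"
  shows "(\<integral>\<^sup>+k. ennreal (G (lam / q powr real_of_int k)) \<partial>count_space UNIV) = ennreal (scale_sum q G lam)"
  unfolding scale_sum_def using G q assms
  by (intro nn_integral_count_space_eq_infsum summable_on_scale_sum) (auto simp: sqrt_inverse_bounded_def)

lemma borel_measurable_scale_sum_powr: "(\<lambda>r. scale_sum q G (q powr r)) \<in> borel_measurable borel"
proof -
  have summand: "(\<lambda>r. G (q powr r / q powr real_of_int k)) \<in> borel_measurable borel" for k
    using q by (intro borel_measurable_comp_positive continuous_intros) auto
  have "(\<lambda>r. scale_sum q G (q powr r))
      = (\<lambda>r. enn2real (\<integral>\<^sup>+k. ennreal (G (q powr r / q powr real_of_int k)) \<partial>count_space UNIV))"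
    using q G by (simp add: fun_eq_iff nn_integral_count_space_scale_sum scale_sum_nonneg)
  also have "\<dots> \<in> borel_measurable borel"
    using summand by (intro borel_measurable_enn2real borel_measurable_nn_integral_count_space_int) measurable
  finally show ?thesis .
qed

lemma nn_integral_exp_comp_eq_scale_sum:
  "(\<integral>\<^sup>+t. ennreal (G (exp t)) \<partial>lborel)
    = ennreal (ln q) * (\<integral>\<^sup>+r. indicator {0..<1} r * ennreal (scale_sum q G (q powr r)) \<partial>lborel)"
proof -
  have [measurable]: "(\<lambda>s. G (q powr s)) \<in> borel_measurable borel"
    "(\<lambda>t. G (exp t)) \<in> borel_measurable borel"
    using q by (intro borel_measurable_comp_positive continuous_intros; simp)+
  have "exp (ln q * s) = q powr s" for s using q by (simp add: powr_def mult.commute)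
  hence "(\<integral>\<^sup>+t. ennreal (G (exp t)) \<partial>lborel) = ennreal (ln q) * (\<integral>\<^sup>+s. ennreal (G (q powr s)) \<partial>lborel)"
    using nn_integral_real_affine[of "\<lambda>t. ennreal (G (exp t))" "ln q" 0] q by simp
  also have "(\<integral>\<^sup>+s. ennreal (G (q powr s)) \<partial>lborel)
      = (\<integral>\<^sup>+r. indicator {0..<1} r * (\<integral>\<^sup>+k. ennreal (G (q powr (r - real_of_int k))) \<partial>count_space UNIV) \<partial>lborel)"
    by (rule nn_integral_lborel_periodize) measurable
  also have "\<dots> = (\<integral>\<^sup>+r. indicator {0..<1} r * ennreal (scale_sum q G (q powr r)) \<partial>lborel)"
    using q by (simp add: powr_diff nn_integral_count_space_scale_sum)
  finally show ?thesis .
qed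

lemma
  shows integrable_on_exp_comp: "(\<lambda>t. G (exp t)) integrable_on UNIV"
    and integral_scale_sum_period:
      "integral {0..1} (\<lambda>r. scale_sum q G (q powr r)) = integral UNIV (\<lambda>t. G (exp t)) / ln q"
proof -
  have [measurable]: "(\<lambda>r. scale_sum q G (q powr r)) \<in> borel_measurable borel"
    by (rule borel_measurable_scale_sum_powr)
  have S0: "0 \<le> scale_sum q G (q powr r)" for r
    using G q by (simp add: scale_sum_nonneg)
  define M where "M = C * (sqrt q / (1 - 1 / sqrt q) + 1 / (q - 1))"
  define X where "X = (\<integral>\<^sup>+r. indicator {0..<1} r * ennreal (scale_sum q G (q powr r)) \<partial>lborel)"
  have "X \<le> (\<integral>\<^sup>+r. ennreal M * indicator {0..<1::real} r \<partial>lborel)"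
    unfolding X_def M_def using scale_sum_le_on_period[OF G q]
    by (intro nn_integral_mono) (auto intro!: ennreal_leI split: split_indicator)
  also have "\<dots> = ennreal M"
    by (subst nn_integral_cmult_indicator) auto
  finally obtain x where x: "X = ennreal x" "0 \<le> x"
    by (cases X) (auto simp: top_unique)
  have "(\<integral>\<^sup>+t. ennreal (G (exp t)) \<partial>lborel) = ennreal (ln q * x)"
    using nn_integral_exp_comp_eq_scale_sum x q by (simp add: X_def ennreal_mult)
  moreover have "(\<lambda>t. G (exp t)) \<in> borel_measurable borel"
    by (rule borel_measurable_comp_positive) (auto intro: continuous_intros)
  moreover have "0 \<le> G (exp t)" for t
    using G by (simp add: sqrt_inverse_bounded_def)
  ultimately have has_int: "((\<lambda>t. G (exp t)) has_integral (ln q * x)) UNIV"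
    using q x by (intro nn_integral_has_integral) auto
  thus "(\<lambda>t. G (exp t)) integrable_on UNIV" by blast
  have "(\<integral>\<^sup>+r. ennreal (indicator {0..1} r * scale_sum q G (q powr r)) \<partial>lborel) = X"
    unfolding X_def
    by (intro nn_integral_cong_AE, use AE_lborel_singleton[of "1::real"] in eventually_elim)
       (auto split: split_indicator)
  hence "((\<lambda>r. indicator {0..1} r * scale_sum q G (q powr r)) has_integral x) UNIV"
    using x S0 by (intro nn_integral_has_integral) auto
  moreover have "(\<lambda>r. indicator {0..1} r * scale_sum q G (q powr r))
      = (\<lambda>r. if r \<in> {0..1} then scale_sum q G (q powr r) else 0)"
    by (simp add: fun_eq_iff indicator_def)
  ultimately have "((\<lambda>r. scale_sum q G (q powr r)) has_integral x) {0..1}"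
    using has_integral_restrict_UNIV[of "{0..1}"] by metis
  thus "integral {0..1} (\<lambda>r. scale_sum q G (q powr r)) = integral UNIV (\<lambda>t. G (exp t)) / ln q"
    using has_int q by (simp add: integral_unique)
qed

end

subsection \<open>The sketch q-LL\<close>

definition ll_mass :: "real \<Rightarrow> real \<Rightarrow> real" where
  "ll_mass q x = exp (- x) - exp (- (q * x))"

definition ll_mass_deriv :: "real \<Rightarrow> real \<Rightarrow> real" where
  "ll_mass_deriv q x = - exp (- x) + q * exp (- (q * x))"

definition entropy_term :: "real \<Rightarrow> real \<Rightarrow> real" where
  "entropy_term q x = - ll_mass q x * log 2 (ll_mass q x)"

definition fisher_term :: "real \<Rightarrow> real \<Rightarrow> real" where
  "fisher_term q x = (x * ll_mass_deriv q x)\<^sup>2 / ll_mass q x"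

lemma has_real_derivative_ll_mass: "(ll_mass q has_real_derivative ll_mass_deriv q x) (at x)"
  unfolding ll_mass_def ll_mass_deriv_def by (auto intro!: derivative_eq_intros)

lemma qLL_eq_ll_mass:
  assumes "q > 0"
  shows "qLL q lam k = ll_mass q (lam / q powr real_of_int k)"
proof -
  have "q powr (real_of_int k - 1) = q powr real_of_int k / q"
    using assms by (simp add: powr_diff)
  thus ?thesis
    using assms by (simp add: qLL_def ll_mass_def field_simps)
qed

lemma deriv_qLL:
  assumes q: "q > 0"
  shows "deriv (\<lambda>l. qLL q l k) lam
    = ll_mass_deriv q (lam / q powr real_of_int k) / q powr real_of_int k"
proof -
  define a where "a = q powr real_of_int k"
  have "a > 0" using q by (simp add: a_def)
  have "((\<lambda>l. ll_mass q (l / a)) has_real_derivative ll_mass_deriv q (lam / a) * (1 / a)) (at lam)"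
    by (rule DERIV_chain2[OF has_real_derivative_ll_mass])
       (use \<open>a > 0\<close> in \<open>auto intro!: derivative_eq_intros\<close>)
  moreover have "(\<lambda>l. qLL q l k) = (\<lambda>l. ll_mass q (l / a))"
    using q by (simp add: fun_eq_iff qLL_eq_ll_mass a_def)
  ultimately show ?thesis
    unfolding a_def by (simp add: DERIV_imp_deriv)
qed

lemma entropy_qLL:
  assumes "q > 0"
  shows "entropy (qLL q) lam = scale_sum q (entropy_term q) lam"
  unfolding entropy_def scale_sum_def entropy_term_def qLL_eq_ll_mass[OF assms] ..

lemma fisher_qLL_summand:
  assumes q: "q > 0" and lam: "lam > 0"
  shows "(deriv (\<lambda>l. qLL q l k) lam)\<^sup>2 / qLL q lam k
    = fisher_term q (lam / q powr real_of_int k) * (1 / lam\<^sup>2)"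
  unfolding deriv_qLL[OF q] unfolding qLL_eq_ll_mass[OF q] fisher_term_def
  using q lam by (simp add: field_simps power2_eq_square)

lemma fisher_qLL:
  assumes "q > 0" and "lam > 0"
  shows "fisher (qLL q) lam = scale_sum q (fisher_term q) lam / lam\<^sup>2"
  unfolding fisher_def fisher_qLL_summand[OF assms] scale_sum_def infsum_cmult_left' by simp

lemma ll_mass_pos: "q > 1 \<Longrightarrow> x > 0 \<Longrightarrow> 0 < ll_mass q x"
  unfolding ll_mass_def by simp

lemma ll_mass_le_exp: "q > 1 \<Longrightarrow> x > 0 \<Longrightarrow> ll_mass q x \<le> exp (- x)"
  unfolding ll_mass_def by simp

lemma ll_mass_le_linear:
  assumes "q > 1" "x > 0"
  shows "ll_mass q x \<le> (q - 1) * x"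
proof -
  have "exp (- (q * x)) = exp (- x) * exp (- ((q - 1) * x))"
    by (simp add: exp_add[symmetric] algebra_simps)
  moreover have "1 - exp (- ((q - 1) * x)) \<le> (q - 1) * x"
    using exp_ge_add_one_self[of "- ((q - 1) * x)"] by simp
  moreover have "exp (- ((q - 1) * x)) \<le> 1" "exp (- x) \<le> 1"
    using assms by auto
  ultimately have "exp (- x) * (1 - exp (- ((q - 1) * x))) \<le> 1 * ((q - 1) * x)"
    by (intro mult_mono) auto
  thus ?thesis
    unfolding ll_mass_def by (simp add: algebra_simps \<open>exp (- (q * x)) = _\<close>)
qed

lemma neg_mult_ln_le_sqrt:
  assumes "0 < p"
  shows "- p * ln p \<le> sqrt p"
proof -
  define u where "u = 1 / sqrt p"
  have u: "u > 0" using assms by (simp add: u_def)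
  have "ln (u / 2) \<le> u / 2 - 1" using ln_le_minus_one[of "u / 2"] u by simp
  hence "ln u \<le> u / 2" using u ln_2_less_1 by (simp add: ln_div)
  moreover have "- ln p = 2 * ln u"
    using assms by (simp add: u_def ln_div ln_sqrt)
  ultimately have "p * (- ln p) \<le> p * (1 / sqrt p)"
    using assms by (intro mult_left_mono) (auto simp: u_def)
  also have "p * (1 / sqrt p) = sqrt p"
    using real_div_sqrt[of p] assms by simp
  finally show ?thesis by simp
qed

lemma exp_neg_mult_power_le:
  assumes "0 \<le> x"
  shows "exp (- x) * x ^ n \<le> real n ^ n"
proof (cases "n = 0")
  case False
  have "x / n \<le> exp (x / n)"
    using exp_ge_add_one_self[of "x / n"] by linarith
  hence "(x / n) ^ n \<le> exp (x / n) ^ n"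
    using assms by (intro power_mono) auto
  also have "exp (x / n) ^ n = exp x"
    using False by (simp add: exp_of_nat_mult[symmetric])
  finally show ?thesis
    using False by (simp add: power_divide exp_minus field_simps)
qed (use assms in simp)

lemma sqrt_inverse_bounded_entropy_term:
  assumes q: "q > 1"
  shows "sqrt_inverse_bounded ((sqrt (q - 1) + 2) / ln 2) (entropy_term q)"
proof (rule sqrt_inverse_boundedI)
  fix x :: real assume x: "x > 0"
  let ?f = "ll_mass q x"
  have f: "0 < ?f" "?f \<le> 1"
    using ll_mass_pos[OF q x] ll_mass_le_exp[OF q x] x by (auto simp: order_trans[of _ "exp (- x)"])
  have entropy: "entropy_term q x = - ?f * ln ?f / ln 2"
    unfolding entropy_term_def log_def by simp
  show "0 \<le> entropy_term q x"
    unfolding entropy using f mult_nonneg_nonpos[of ?f "ln ?f"] by (simp add: divide_nonpos_pos)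
  have le_sqrt: "entropy_term q x \<le> sqrt ?f / ln 2"
    unfolding entropy by (intro divide_right_mono neg_mult_ln_le_sqrt f) simp
  have "x / 2 \<le> exp (x / 2)"
    using exp_ge_add_one_self[of "x / 2"] by linarith
  hence "exp (- x / 2) \<le> 2 / x"
    using x by (simp add: exp_minus field_simps)
  moreover have "sqrt (exp (- x)) = exp (- x / 2)"
    by (rule real_sqrt_unique) (simp_all add: power2_eq_square exp_add[symmetric])
  hence "sqrt ?f \<le> exp (- x / 2)"
    using ll_mass_le_exp[OF q x] real_sqrt_le_mono[of ?f "exp (- x)"] by simp
  ultimately have "sqrt ?f \<le> (sqrt (q - 1) + 2) / x"
    using x q by (smt (verit) divide_right_mono real_sqrt_ge_zero)
  hence "sqrt ?f / ln 2 \<le> ((sqrt (q - 1) + 2) / x) / ln 2"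
    by (rule divide_right_mono) simp
  thus "entropy_term q x \<le> ((sqrt (q - 1) + 2) / ln 2) / x"
    using le_sqrt by (simp add: mult.commute)
  assume "x \<le> 1"
  have "sqrt ?f \<le> sqrt (q - 1) * sqrt x"
    using ll_mass_le_linear[OF q x] by (simp add: real_sqrt_mult[symmetric])
  also have "\<dots> \<le> (sqrt (q - 1) + 2) * sqrt x"
    using x by (intro mult_right_mono) auto
  finally show "entropy_term q x \<le> ((sqrt (q - 1) + 2) / ln 2) * sqrt x"
    using le_sqrt by (simp add: divide_right_mono order_trans)
qed


lemma inverse_one_minus_exp_neg_le:
  fixes y :: real
  assumes y: "y > 0"
  shows "1 / (1 - exp (- y)) \<le> 1 + 1 / y"
proof -
  have "1 / exp y \<le> 1 / (1 + y)"
    by (intro divide_left_mono) (use y in auto)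
  hence le: "y / (1 + y) \<le> 1 - exp (- y)"
    using y by (simp add: exp_minus field_simps)
  have "1 / (1 - exp (- y)) \<le> 1 / (y / (1 + y))"
    using y by (intro divide_left_mono[OF le] mult_pos_pos) auto
  thus ?thesis
    using y by (simp add: field_simps)
qed

lemma fisher_term_le:
  assumes q: "q > 1" and x: "x > 0"
  shows "fisher_term q x \<le> q\<^sup>2 * (exp (- x) * (x / (q - 1) + x\<^sup>2))"
proof -
  define v where "v = exp (- ((q - 1) * x))"
  have v: "0 < v" "v < 1" using q x by (auto simp: v_def)
  have "exp (- (q * x)) = exp (- x) * v"
    by (simp add: v_def exp_add[symmetric] algebra_simps)
  hence "fisher_term q x = x\<^sup>2 * exp (- x) * (q * v - 1)\<^sup>2 * (1 / (1 - v))"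
    using v by (simp add: fisher_term_def ll_mass_def ll_mass_deriv_def power2_eq_square field_simps)
  also have "\<dots> \<le> x\<^sup>2 * exp (- x) * q\<^sup>2 * (1 + 1 / ((q - 1) * x))"
  proof (intro mult_mono)
    have "q * v \<le> q" "0 < q * v"
      using q v by auto
    hence "\<bar>q * v - 1\<bar> \<le> q"
      unfolding abs_le_iff using q by linarith
    thus "(q * v - 1)\<^sup>2 \<le> q\<^sup>2"
      by (metis abs_ge_zero order_trans power2_abs power_mono)
    show "1 / (1 - v) \<le> 1 + 1 / ((q - 1) * x)"
      unfolding v_def using q x by (intro inverse_one_minus_exp_neg_le) simp
  qed (use v in auto)
  also have "\<dots> = q\<^sup>2 * (exp (- x) * (x / (q - 1) + x\<^sup>2))"
    using q x by (simp add: field_simps power2_eq_square)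
  finally show ?thesis .
qed

lemma sqrt_inverse_bounded_fisher_term:
  assumes q: "q > 1"
  shows "sqrt_inverse_bounded (q\<^sup>2 * (4 / (q - 1) + 27)) (fisher_term q)"
proof (rule sqrt_inverse_boundedI)
  fix x :: real assume x: "x > 0"
  show "0 \<le> fisher_term q x"
    unfolding fisher_term_def using ll_mass_pos[OF q x] by simp
  have "x * (exp (- x) * (x / (q - 1) + x\<^sup>2))
      = (exp (- x) * x ^ 2) / (q - 1) + exp (- x) * x ^ 3"
    by (simp add: field_simps power2_eq_square power3_eq_cube)
  also have "\<dots> \<le> 4 / (q - 1) + 27"
    using exp_neg_mult_power_le[of x 2] exp_neg_mult_power_le[of x 3] x q
    by (intro add_mono divide_right_mono) auto
  finally have "exp (- x) * (x / (q - 1) + x\<^sup>2) \<le> (4 / (q - 1) + 27) / x"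
    using x by (simp add: field_simps)
  thus "fisher_term q x \<le> q\<^sup>2 * (4 / (q - 1) + 27) / x"
    using fisher_term_le[OF q x] mult_left_mono[of _ _ "q\<^sup>2"] by fastforce
  assume "x \<le> 1"
  hence "x \<le> sqrt x"
    using x by (intro real_le_rsqrt) (simp add: power2_eq_square mult_le_cancel_left1)
  have "exp (- x) * (x / (q - 1) + x\<^sup>2) \<le> 1 * (x / (q - 1) + x\<^sup>2)"
    using x q by (intro mult_right_mono) auto
  also have "\<dots> \<le> x / (q - 1) + x"
    using x \<open>x \<le> 1\<close> by (simp add: power2_eq_square mult_le_cancel_right1)
  also have "\<dots> \<le> 4 * (x / (q - 1)) + 27 * x"
    using x q divide_nonneg_pos[of x "q - 1"] by linarith
  also have "\<dots> = (4 / (q - 1) + 27) * x"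
    by (simp add: algebra_simps)
  also have "\<dots> \<le> (4 / (q - 1) + 27) * sqrt x"
    using q \<open>x \<le> sqrt x\<close> by (intro mult_left_mono) auto
  finally show "fisher_term q x \<le> q\<^sup>2 * (4 / (q - 1) + 27) * sqrt x"
    using fisher_term_le[OF q x] mult_left_mono[of _ _ "q\<^sup>2"] by fastforce
qed

lemma continuous_on_ll_mass: "continuous_on S (ll_mass q)"
  unfolding ll_mass_def by (intro continuous_intros)

lemma continuous_on_entropy_term: "q > 1 \<Longrightarrow> continuous_on {0<..} (entropy_term q)"
  unfolding entropy_term_def using ll_mass_pos
  by (intro continuous_intros continuous_on_ll_mass) (auto simp: less_imp_neq[symmetric])

lemma continuous_on_fisher_term: "q > 1 \<Longrightarrow> continuous_on {0<..} (fisher_term q)"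
  unfolding fisher_term_def ll_mass_deriv_def using ll_mass_pos
  by (intro continuous_intros continuous_on_ll_mass) (auto simp: less_imp_neq[symmetric])

lemma phi_integrand_eq: "phi_integrand q = (\<lambda>t. entropy_term q (exp t))"
  by (simp add: fun_eq_iff phi_integrand_def entropy_term_def ll_mass_def)

lemma rho_integrand_eq: "rho_integrand q = (\<lambda>t. fisher_term q (exp t))"
  by (simp add: fun_eq_iff rho_integrand_def fisher_term_def ll_mass_def ll_mass_deriv_def algebra_simps)

theorem mainTheorem4:
  fixes q :: real
  assumes "q > 1"
  shows "weakly_scale_invariant (qLL q) q
     \<and> (\<forall>lam>0. (\<lambda>k. - qLL q lam k * log 2 (qLL q lam k)) summable_on UNIV
               \<and> (\<lambda>k. (deriv (\<lambda>l. qLL q l k) lam)\<^sup>2 / qLL q lam k) summable_on UNIV)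
     \<and> phi_integrand q integrable_on UNIV
     \<and> rho_integrand q integrable_on UNIV
     \<and> scaled_entropy (qLL q) q = phi q / ln q
     \<and> scaled_fisher (qLL q) q = rho q / ln q"
proof -
  have q0: "q > 0" using assms by simp
  note entropy = assms sqrt_inverse_bounded_entropy_term[OF assms] continuous_on_entropy_term[OF assms]
  note fisher = assms sqrt_inverse_bounded_fisher_term[OF assms] continuous_on_fisher_term[OF assms]
  have "weakly_scale_invariant (qLL q) q"
    using assms by (simp add: weakly_scale_invariant_def entropy_qLL fisher_qLL scale_sum_mult_base
        power_mult_distrib)
  moreover have "(\<lambda>k. - qLL q lam k * log 2 (qLL q lam k)) summable_on UNIV" if "lam > 0" for lam
    using summable_on_scale_sum[OF entropy(2,1) that]
    by (simp add: qLL_eq_ll_mass[OF q0] entropy_term_def)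
  moreover have "(\<lambda>k. (deriv (\<lambda>l. qLL q l k) lam)\<^sup>2 / qLL q lam k) summable_on UNIV" if "lam > 0" for lam
    unfolding fisher_qLL_summand[OF q0 that]
    by (intro summable_on_cmult_left summable_on_scale_sum[OF fisher(2,1) that])
  moreover have "q powr (2 * r) * fisher (qLL q) (q powr r) = scale_sum q (fisher_term q) (q powr r)" for r
    using q0 by (simp add: fisher_qLL powr_add[symmetric] power2_eq_square)
  ultimately show ?thesis
    using integrable_on_exp_comp[OF entropy] integral_scale_sum_period[OF entropy]
      integrable_on_exp_comp[OF fisher] integral_scale_sum_period[OF fisher]
    by (simp add: phi_integrand_eq rho_integrand_eq phi_def rho_def scaled_entropy_def
        scaled_fisher_def entropy_qLL[OF q0])
qed

end
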